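(* Let $X$ be a metric space. For $g\in\mathfrak{S}^\infty(\mathfrak{C}X)$ define $\mathsf{dist}\,g := \lambda\varepsilon.\ \mathsf{map}\,(\lambda x.\,x\,\varepsilon)\,g$. Then $\mathsf{dist}\,g\in\mathfrak{C}(\mathfrak{S}^\infty X)$, and $\mathsf{dist}:\mathfrak{S}^\infty(\mathfrak{C}X)\to\mathfrak{C}(\mathfrak{S}^\infty X)$ is uniformly continuous. Consequently, for every uniformly continuous $f:\mathbb{Q}\to\mathbb{R}$ (where $\mathbb{R}:=\mathfrak{C}\mathbb{Q}$), the composite $\mathsf{dist}\circ(\mathsf{map}\ f):\mathfrak{S}^\infty\mathbb{Q}\to\mathfrak{C}(\mathfrak{S}^\infty\mathbb{Q})$ is uniformly continuous.
   Context: Step functions. For a type $X$, $\mathfrak{S}X$ is the inductive type of (formal, rational) step functions on $[0,1]$: constructors $\mathsf{const}\ x$ ($x\in X$, written $\hat x$) and $\mathsf{glue}\ o\ f\ g$ ($o\in(0,1)\cap\mathbb{Q}$, $f,g\in\mathfrak{S}X$). Split. For $a\in(0,1)\cap\mathbb{Q}$: $\mathsf{SplitL}\ \hat x\ a := \hat x$, $\mathsf{SplitR}\ \hat x\ a:=\hat x$, and $\mathsf{SplitL}(\mathsf{glue}\ o\ f_l\ f_r)\ a :=$ $\mathsf{SplitL}\ f_l\ (a/o)$ if $a<o$; $f_l$ if $a=o$; $\mathsf{glue}\ (o/a)\ f_l\ (\mathsf{SplitL}\ f_r\ \tfrac{a-o}{1-o})$ if $a>o$. $\mathsf{SplitR}(\mathsf{glue}\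 o\ f_l\ f_r)\ a :=$ $\mathsf{glue}\ \tfrac{o-a}{1-a}\ (\mathsf{SplitR}\ f_l\ (a/o))\ f_r$ if $a<o$; $f_r$ if $a=o$; $\mathsf{SplitR}\ f_r\ \tfrac{a-o}{1-o}$ if $a>o$. Map and ap. $\mathsf{map}\ \varphi\ \hat x := \widehat{\varphi x}$, $\mathsf{map}\ \varphi\ (\mathsf{glue}\ o\ f\ g):=\mathsf{glue}\ o\ (\mathsf{map}\ \varphi\ f)(\mathsf{map}\ \varphi\ g)$; $\varphi\circ x:=\mathsf{map}\ \varphi\ x$. $\hat\varphi @ x := \mathsf{map}\ \varphi\ x$, $(\mathsf{glue}\ o\ F_l\ F_r) @ x := \mathsf{glue}\ o\ (F_l @ \mathsf{SplitL}\ x\ o)\ (F_r @ \mathsf{SplitR}\ x\ o)$. Fold. $\mathsf{fold}\ \varphi\ \psi\ \hat x:=\varphi x$, $\mathsf{fold}\ \varphi\ \psi\ (\mathsf{glue}\ o\ f\ g) := \psi\ o\ (\mathsf{fold}\ \varphi\ \psi\ f)(\mathsf{fold}\ \varphi\ \psi\ g)$; $\mathsf{fold}_\star := \mathsf{fold}\ \mathrm{id}\ (\lambda o\,p\,q.\ p\wedge q)$. Metric spaces: setoids with a respectful ball relation $\mathbf{B}_\varepsilon x\,y$ ($\varepsilon\in\mathbb{Q}^+$) satisfying reflexivity, symmetry, triangle inequality $\mathbf{B}_{\varepsilon_1}xy\wedge\mathbf{B}_{\varepsilon_2}yz\Rightarrow\mathbf{B}_{\varepsilon_1+\varepsilon_2}xz$,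 closedness ($(\forall\delta>\varepsilon.\mathbf{B}_\delta xy)\Rightarrow\mathbf{B}_\varepsilon xy$) and separation ($(\forall\varepsilon.\mathbf{B}_\varepsilon xy)\Rightarrow x\asymp y$). $\mathbb{Q}$ has $\mathbf{B}_\varepsilon x\,y:=|x-y|\le\varepsilon$. For a metric space $X$, $\mathfrak{S}^\infty X$ is $\mathfrak{S}X$ with ball $\mathbf{B}_\varepsilon f\,g := \mathsf{fold}_\star(\mathbf{B}^X_\varepsilon\circ f @ g)$. Completion. $\mathfrak{C}X$ is the set of functions $x:\mathbb{Q}^+\to X$ with $\mathbf{B}^X_{\varepsilon_1+\varepsilon_2}(x\varepsilon_1)(x\varepsilon_2)$ for all $\varepsilon_1,\varepsilon_2$, with ball $\mathbf{B}_\varepsilon x\,y := \forall\delta_1\delta_2\in\mathbb{Q}^+.\ \mathbf{B}^X_{\delta_1+\varepsilon+\delta_2}(x\delta_1)(y\delta_2)$ (and $x\asymp y$ iff $\mathbf{B}_\varepsilon xy$ for all $\varepsilon$). $\mathbb{R}:=\mathfrak{C}\mathbb{Q}$. Uniform continuity: $F:X\to Y$ is uniformly continuous if there is $\mu:\mathbb{Q}^+\to\mathbb{Q}^+$ with $\mathbf{B}^X_{\mu\varepsilon}x_1x_2\Rightarrow\mathbf{B}^Y_\varepsilon(Fx_1)(Fx_2)$. *)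

theory Defs
  imports Main "HOL.Rat"
begin

section \<open>Formal rational step functions on [0,1]\<close>

datatype 'a stepf = Const 'a | Glue rat "'a stepf" "'a stepf"

fun smap :: "('a \<Rightarrow> 'b) \<Rightarrow> 'a stepf \<Rightarrow> 'b stepf" where
  "smap \<phi> (Const x) = Const (\<phi> x)"
| "smap \<phi> (Glue r f g) = Glue r (smap \<phi> f) (smap \<phi> g)"

fun SplitL :: "'a stepf \<Rightarrow> rat \<Rightarrow> 'a stepf" where
  "SplitL (Const x) a = Const x"
| "SplitL (Glue r fl fr) a =
     (if a < r then SplitL fl (a / r)
      else if a = r then fl
      else Glue (r / a) fl (SplitL fr ((a - r) / (1 - r))))"

fun SplitR :: "'a stepf \<Rightarrow> rat \<Rightarrow> 'a stepf" where
  "SplitR (Const x) a = Const x"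
| "SplitR (Glue r fl fr) a =
     (if a < r then Glue ((r - a) / (1 - a)) (SplitR fl (a / r)) fr
      else if a = r then fr
      else SplitR fr ((a - r) / (1 - r)))"

fun sap :: "('a \<Rightarrow> 'b) stepf \<Rightarrow> 'a stepf \<Rightarrow> 'b stepf" (infixl "@@" 70) where
  "sap (Const \<phi>) x = smap \<phi> x"
| "sap (Glue r Fl Fr) x = Glue r (sap Fl (SplitL x r)) (sap Fr (SplitR x r))"

fun sfold :: "('a \<Rightarrow> 'b) \<Rightarrow> (rat \<Rightarrow> 'b \<Rightarrow> 'b \<Rightarrow> 'b) \<Rightarrow> 'a stepf \<Rightarrow> 'b" where
  "sfold \<phi> \<psi> (Const x) = \<phi> x"
| "sfold \<phi> \<psi> (Glue r f g) = \<psi> r (sfold \<phi> \<psi> f) (sfold \<phi> \<psi> g)"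

definition fold_star :: "bool stepf \<Rightarrow> bool" where
  "fold_star = sfold id (\<lambda>r p q. p \<and> q)"

fun wf_stepf :: "'a set \<Rightarrow> 'a stepf \<Rightarrow> bool" where
  "wf_stepf S (Const x) = (x \<in> S)"
| "wf_stepf S (Glue r f g) = (0 < r \<and> r < 1 \<and> wf_stepf S f \<and> wf_stepf S g)"

definition is_metric :: "'a set \<Rightarrow> ('a \<Rightarrow> 'a \<Rightarrow> bool) \<Rightarrow> (rat \<Rightarrow> 'a \<Rightarrow> 'a \<Rightarrow> bool) \<Rightarrow> bool" where
  "is_metric S E B \<longleftrightarrow>
     \<comment> \<open>setoid\<close>
     (\<forall>x\<in>S. E x x) \<and> (\<forall>x\<in>S. \<forall>y\<in>S. E x y \<longrightarrow> E y x) \<and>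
     (\<forall>x\<in>S. \<forall>y\<in>S. \<forall>z\<in>S. E x y \<longrightarrow> E y z \<longrightarrow> E x z) \<and>
     \<comment> \<open>respectful\<close>
     (\<forall>e>0. \<forall>x\<in>S. \<forall>x'\<in>S. \<forall>y\<in>S. \<forall>y'\<in>S. E x x' \<longrightarrow> E y y' \<longrightarrow> (B e x y \<longleftrightarrow> B e x' y')) \<and>
     \<comment> \<open>reflexivity\<close>
     (\<forall>e>0. \<forall>x\<in>S. B e x x) \<and>
     \<comment> \<open>symmetry\<close>
     (\<forall>e>0. \<forall>x\<in>S. \<forall>y\<in>S. B e x y \<longrightarrow> B e y x) \<and>
     \<comment> \<open>triangle inequality\<close>
     (\<forall>e1>0. \<forall>e2>0. \<forall>x\<in>S. \<forall>y\<in>S. \<forall>z\<in>S. B e1 x y \<longrightarrow> B e2 y z \<longrightarrow> B (e1 + e2) x z) \<and>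
     \<comment> \<open>closedness\<close>
     (\<forall>e>0. \<forall>x\<in>S. \<forall>y\<in>S. (\<forall>d>e. B d x y) \<longrightarrow> B e x y) \<and>
     \<comment> \<open>separation\<close>
     (\<forall>x\<in>S. \<forall>y\<in>S. (\<forall>e>0. B e x y) \<longrightarrow> E x y)"

definition Qball :: "rat \<Rightarrow> rat \<Rightarrow> rat \<Rightarrow> bool" where
  "Qball e x y \<longleftrightarrow> \<bar>x - y\<bar> \<le> e"

definition SInf_carrier :: "'a set \<Rightarrow> 'a stepf set" where
  "SInf_carrier S = {f. wf_stepf S f}"

definition SInf_eq :: "('a \<Rightarrow> 'a \<Rightarrow> bool) \<Rightarrow> 'a stepf \<Rightarrow> 'a stepf \<Rightarrow> bool" where
  "SInf_eq E f g = fold_star (smap E f @@ g)"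

definition SInf_ball :: "(rat \<Rightarrow> 'a \<Rightarrow> 'a \<Rightarrow> bool) \<Rightarrow> rat \<Rightarrow> 'a stepf \<Rightarrow> 'a stepf \<Rightarrow> bool" where
  "SInf_ball B e f g = fold_star (smap (B e) f @@ g)"

text \<open>Completion: regular functions from positive rationals into X
  (values at non-positive arguments are irrelevant).\<close>
definition C_carrier :: "'a set \<Rightarrow> (rat \<Rightarrow> 'a \<Rightarrow> 'a \<Rightarrow> bool) \<Rightarrow> (rat \<Rightarrow> 'a) set" where
  "C_carrier S B = {x. (\<forall>e>0. x e \<in> S) \<and> (\<forall>e1>0. \<forall>e2>0. B (e1 + e2) (x e1) (x e2))}"

definition C_ball :: "(rat \<Rightarrow> 'a \<Rightarrow> 'a \<Rightarrow> bool) \<Rightarrow> rat \<Rightarrow> (rat \<Rightarrow> 'a) \<Rightarrow> (rat \<Rightarrow> 'a) \<Rightarrow> bool" where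
  "C_ball B e x y \<longleftrightarrow> (\<forall>d1>0. \<forall>d2>0. B (d1 + e + d2) (x d1) (y d2))"

definition C_eq :: "(rat \<Rightarrow> 'a \<Rightarrow> 'a \<Rightarrow> bool) \<Rightarrow> (rat \<Rightarrow> 'a) \<Rightarrow> (rat \<Rightarrow> 'a) \<Rightarrow> bool" where
  "C_eq B x y \<longleftrightarrow> (\<forall>e>0. C_ball B e x y)"

definition unif_cont ::
  "'a set \<Rightarrow> (rat \<Rightarrow> 'a \<Rightarrow> 'a \<Rightarrow> bool) \<Rightarrow> 'b set \<Rightarrow> (rat \<Rightarrow> 'b \<Rightarrow> 'b \<Rightarrow> bool) \<Rightarrow> ('a \<Rightarrow> 'b) \<Rightarrow> bool" where
  "unif_cont S1 B1 S2 B2 F \<longleftrightarrow>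
     (\<forall>x\<in>S1. F x \<in> S2) \<and>
     (\<exists>\<mu>. \<forall>e>0. 0 < \<mu> e \<and> (\<forall>x1\<in>S1. \<forall>x2\<in>S1. B1 (\<mu> e) x1 x2 \<longrightarrow> B2 e (F x1) (F x2)))"

definition sdist :: "(rat \<Rightarrow> 'a) stepf \<Rightarrow> rat \<Rightarrow> 'a stepf" where
  "sdist g = (\<lambda>e. smap (\<lambda>x. x e) g)"

end

theory Submission
  imports Defs
begin

text \<open>
  All balls on step functions have the form
  \<open>fold_star (smap R f @@ g)\<close> for a relation \<open>R\<close>: they say that \<open>R\<close> holds between the
  values of \<open>f\<close> and \<open>g\<close> on every piece of the common refinement of their partitions.
  We make this precise by the pairing \<open>szip f g = smap Pair f @@ g\<close>, through which every
  such combination factors and which is natural in \<open>f\<close> and \<open>g\<close>.  Two consequences carry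
  the whole argument: a transfer principle (if \<open>R x y\<close> implies \<open>R' (\<phi> x) (\<psi> y)\<close>, then
  \<open>R\<close>-closeness of \<open>f, g\<close> implies \<open>R'\<close>-closeness of \<open>smap \<phi> f, smap \<psi> g\<close>) and a diagonal
  principle (\<open>f\<close> is \<open>R\<close>-close to itself iff \<open>R x x\<close> for all its values).
  Regularity of \<open>sdist g\<close> follows from the diagonal principle, uniform continuity of
  \<open>sdist\<close> (with the identity modulus) and of \<open>smap f\<close> (with the modulus of \<open>f\<close>) from the
  transfer principle; the final claim is a composition of uniformly continuous maps.
\<close>

lemma smap_comp: "smap \<phi> (smap \<psi> f) = smap (\<phi> \<circ> \<psi>) f"
  by (induct f) auto

lemma SplitL_smap: "SplitL (smap \<psi> g) a = smap \<psi> (SplitL g a)"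
  by (induct g arbitrary: a) auto

lemma SplitR_smap: "SplitR (smap \<psi> g) a = smap \<psi> (SplitR g a)"
  by (induct g arbitrary: a) auto

lemma sap_smap_right: "F @@ smap \<psi> g = smap (\<lambda>h. h \<circ> \<psi>) F @@ g"
  by (induct F arbitrary: g) (auto simp: smap_comp SplitL_smap SplitR_smap)

lemma smap_sap: "smap h (F @@ g) = smap (\<lambda>\<phi>. h \<circ> \<phi>) F @@ g"
  by (induct F arbitrary: g) (auto simp: smap_comp)

lemma sap_diag: "smap \<phi> g @@ g = smap (\<lambda>x. \<phi> x x) g"
  by (induct g) auto

definition szip :: "'a stepf \<Rightarrow> 'b stepf \<Rightarrow> ('a \<times> 'b) stepf" where
  "szip f g = smap Pair f @@ g"

lemma smap_sap_szip: "smap R f @@ g = smap (case_prod R) (szip f g)"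
  by (simp add: szip_def smap_sap smap_comp comp_def)

lemma szip_smap: "szip (smap \<phi> f) (smap \<psi> g) = smap (map_prod \<phi> \<psi>) (szip f g)"
  by (simp add: szip_def sap_smap_right smap_sap smap_comp comp_def)

lemma szip_diag: "szip g g = smap (\<lambda>x. (x, x)) g"
  by (simp add: szip_def sap_diag)

lemma set_smap: "set_stepf (smap \<phi> f) = \<phi> ` set_stepf f"
  by (induct f) auto

lemma set_SplitL: "set_stepf (SplitL g a) \<subseteq> set_stepf g"
  by (induct g arbitrary: a) auto

lemma set_SplitR: "set_stepf (SplitR g a) \<subseteq> set_stepf g"
  by (induct g arbitrary: a) auto

lemma set_szip: "set_stepf (szip f g) \<subseteq> set_stepf f \<times> set_stepf g"
proof (induct f arbitrary: g)
  case (Const x)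
  then show ?case by (auto simp: szip_def set_smap)
next
  case (Glue r fl fr)
  then show ?case
    using set_SplitL[of g r] set_SplitR[of g r] by (fastforce simp: szip_def)
qed

lemma fold_star_smap: "fold_star (smap P X) \<longleftrightarrow> (\<forall>x\<in>set_stepf X. P x)"
  by (induct X) (auto simp: fold_star_def)

lemma fold_star_transfer:
  assumes "fold_star (smap R f @@ g)"
    and "\<And>x y. x \<in> set_stepf f \<Longrightarrow> y \<in> set_stepf g \<Longrightarrow> R x y \<Longrightarrow> R' (\<phi> x) (\<psi> y)"
  shows "fold_star (smap R' (smap \<phi> f) @@ smap \<psi> g)"
proof -
  have "\<forall>p\<in>set_stepf (szip f g). R (fst p) (snd p)"
    using assms(1) by (auto simp: smap_sap_szip fold_star_smap)
  then have "\<forall>p\<in>set_stepf (szip f g). R' (\<phi> (fst p)) (\<psi> (snd p))"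
    using assms(2) set_szip[of f g] by fastforce
  then show ?thesis
    unfolding smap_sap_szip szip_smap by (auto simp: smap_comp fold_star_smap)
qed

lemma fold_star_diag: "fold_star (smap R g @@ g) \<longleftrightarrow> (\<forall>x\<in>set_stepf g. R x x)"
  by (simp add: smap_sap_szip szip_diag smap_comp fold_star_smap)

lemma wf_stepf_smap:
  "wf_stepf T g \<Longrightarrow> (\<And>x. x \<in> T \<Longrightarrow> h x \<in> S) \<Longrightarrow> wf_stepf S (smap h g)"
  by (induct g) auto

lemma wf_stepf_set: "wf_stepf T g \<Longrightarrow> x \<in> set_stepf g \<Longrightarrow> x \<in> T"
  by (induct g) auto

lemma unif_cont_comp:
  assumes "unif_cont S1 B1 S2 B2 F" and "unif_cont S2 B2 S3 B3 G"
  shows "unif_cont S1 B1 S3 B3 (G \<circ> F)"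
proof -
  obtain \<mu> where \<mu>: "\<forall>e>0. 0 < \<mu> e \<and> (\<forall>x1\<in>S1. \<forall>x2\<in>S1. B1 (\<mu> e) x1 x2 \<longrightarrow> B2 e (F x1) (F x2))"
    using assms(1) by (auto simp: unif_cont_def)
  obtain \<nu> where \<nu>: "\<forall>e>0. 0 < \<nu> e \<and> (\<forall>x1\<in>S2. \<forall>x2\<in>S2. B2 (\<nu> e) x1 x2 \<longrightarrow> B3 e (G x1) (G x2))"
    using assms(2) by (auto simp: unif_cont_def)
  have "\<forall>e>0. 0 < \<mu> (\<nu> e) \<and>
      (\<forall>x1\<in>S1. \<forall>x2\<in>S1. B1 (\<mu> (\<nu> e)) x1 x2 \<longrightarrow> B3 e (G (F x1)) (G (F x2)))"
    using \<mu> \<nu> assms by (simp add: unif_cont_def)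
  then show ?thesis
    using assms by (auto simp: unif_cont_def intro!: exI[of _ "\<mu> \<circ> \<nu>"])
qed

lemma unif_cont_smap:
  assumes "unif_cont S1 B1 S2 B2 F"
  shows "unif_cont (SInf_carrier S1) (SInf_ball B1) (SInf_carrier S2) (SInf_ball B2) (smap F)"
proof -
  obtain \<mu> where \<mu>: "\<forall>e>0. 0 < \<mu> e \<and> (\<forall>x1\<in>S1. \<forall>x2\<in>S1. B1 (\<mu> e) x1 x2 \<longrightarrow> B2 e (F x1) (F x2))"
    using assms by (auto simp: unif_cont_def)
  have ball: "SInf_ball B2 e (smap F g1) (smap F g2)"
    if "e > 0" "g1 \<in> SInf_carrier S1" "g2 \<in> SInf_carrier S1" "SInf_ball B1 (\<mu> e) g1 g2"
    for e g1 g2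
    using that(4) unfolding SInf_ball_def
  proof (rule fold_star_transfer)
    fix x y assume "x \<in> set_stepf g1" "y \<in> set_stepf g2" "B1 (\<mu> e) x y"
    moreover have "x \<in> S1" "y \<in> S1"
      using that(2,3) \<open>x \<in> set_stepf g1\<close> \<open>y \<in> set_stepf g2\<close> wf_stepf_set
      by (auto simp: SInf_carrier_def)
    ultimately show "B2 e (F x) (F y)" using \<mu> \<open>e > 0\<close> by blast
  qed
  have "\<forall>g\<in>SInf_carrier S1. smap F g \<in> SInf_carrier S2"
    using assms by (auto simp: unif_cont_def SInf_carrier_def intro: wf_stepf_smap)
  then show ?thesis
    using \<mu> ball unfolding unif_cont_def by blast
qed

text \<open>\<open>sdist g\<close> is a regular function: its approximations at \<open>e1\<close> and \<open>e2\<close> are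
  \<open>(e1 + e2)\<close>-close, piece by piece, because every value of \<open>g\<close> is regular.\<close>
lemma sdist_regular:
  assumes "g \<in> SInf_carrier (C_carrier S B)"
  shows "sdist g \<in> C_carrier (SInf_carrier S) (SInf_ball B)"
proof -
  have wf: "wf_stepf (C_carrier S B) g"
    using assms by (simp add: SInf_carrier_def)
  have "sdist g e \<in> SInf_carrier S" if "e > 0" for e
    using wf that by (auto simp: SInf_carrier_def sdist_def C_carrier_def intro!: wf_stepf_smap)
  moreover have "SInf_ball B (e1 + e2) (sdist g e1) (sdist g e2)"
    if "e1 > 0" "e2 > 0" for e1 e2
  proof -
    have "fold_star (smap (=) g @@ g)"
      by (simp add: fold_star_diag)
    then show ?thesis unfolding SInf_ball_def sdist_def
    proof (rule fold_star_transfer)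
      fix x y assume "x \<in> set_stepf g" "x = y"
      then show "B (e1 + e2) (x e1) (y e2)"
        using wf_stepf_set[OF wf] that by (auto simp: C_carrier_def)
    qed
  qed
  ultimately show ?thesis by (simp add: C_carrier_def)
qed

text \<open>\<open>sdist\<close> does not increase distances, so it is uniformly continuous with the
  identity modulus.\<close>
lemma sdist_ball:
  assumes "SInf_ball (C_ball B) e g1 g2"
  shows "C_ball (SInf_ball B) e (sdist g1) (sdist g2)"
  unfolding C_ball_def
proof (intro allI impI)
  fix d1 d2 :: rat
  assume "d1 > 0" "d2 > 0"
  show "SInf_ball B (d1 + e + d2) (sdist g1 d1) (sdist g2 d2)"
    using assms unfolding SInf_ball_def sdist_def
    by (rule fold_star_transfer) (simp add: C_ball_def \<open>d1 > 0\<close> \<open>d2 > 0\<close>)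
qed

lemma unif_cont_sdist:
  "unif_cont (SInf_carrier (C_carrier S B)) (SInf_ball (C_ball B))
     (C_carrier (SInf_carrier S) (SInf_ball B)) (C_ball (SInf_ball B)) sdist"
  unfolding unif_cont_def
  using sdist_regular sdist_ball by (auto intro!: exI[of _ "\<lambda>e. e"])

theorem mainTheorem14:
  fixes S :: "'a set" and E :: "'a \<Rightarrow> 'a \<Rightarrow> bool" and B :: "rat \<Rightarrow> 'a \<Rightarrow> 'a \<Rightarrow> bool"
  assumes "is_metric S E B"
  shows "(\<forall>g\<in>SInf_carrier (C_carrier S B).
            sdist g \<in> C_carrier (SInf_carrier S) (SInf_ball B))
       \<and> unif_cont (SInf_carrier (C_carrier S B)) (SInf_ball (C_ball B))
                   (C_carrier (SInf_carrier S) (SInf_ball B)) (C_ball (SInf_ball B)) sdist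
       \<and> (\<forall>f :: rat \<Rightarrow> rat \<Rightarrow> rat.
            unif_cont UNIV Qball (C_carrier UNIV Qball) (C_ball Qball) f \<longrightarrow>
            unif_cont (SInf_carrier UNIV) (SInf_ball Qball)
                      (C_carrier (SInf_carrier UNIV) (SInf_ball Qball)) (C_ball (SInf_ball Qball))
                      (sdist \<circ> smap f))"
  using sdist_regular unif_cont_sdist unif_cont_comp[OF unif_cont_smap unif_cont_sdist]
  by blast

end
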